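(* Let $f\colon X\to X$ be a piecewise $\lambda$-contraction and fix $x_0\in X$. Then $\omega(f,x)\subseteq\Omega(f)$ for every $x\in Z(f)$.
   Context: $(X,d)$ is a compact metric space whose open balls are connected, with $\mathrm{diam}(X)>0$, and $\lambda\in(0,1)$. A piecewise $\lambda$-contraction $f$: there exist $N\in\mathbb{N}$, open connected pairwise disjoint $A_1,\dots,A_N\subset X$ with dense union $X'$, and bi-Lipschitz $\varphi_i\colon X\to X$ with Lipschitz constant $\le\lambda$, $f|_{A_i}=\varphi_i|_{A_i}$; $S(f)=X\setminus X'$. $x$ is regular of order $n$ if $f^j(x)\notin S(f)$ for $0\le j<n$, regular if for all $n$; $Z(f)$ is the set of regular points. $\mathcal{I}_n(f)$ is the set of itineraries of order $n$, i.e. tuples $(i_0,\dots,i_{n-1})$ such that some regular point $x$ of order $n$ has $f^j(x)\in A_{i_j}$ for $0\le j<n$. For $\alpha=(i_0,\dots,i_{n-1})$, $\varphi^\alpha=\varphi_{i_{n-1}}\circ\cdots\circ\varphi_{i_0}$. $\Omega(f)=\bigcap_{m\ge1}\overline{\bigcup_{n\ge m}\{\varphi^\alpha(x_0):\alpha\in\mathcal{I}_n(f)\}}$. $\omega(f,x)=\bigcap_{m\ge1}\overline{\bigcup_{n\ge m}\{f^n(x)\}}$. *)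

theory Defs
  imports "HOL-Analysis.Analysis"
begin

definition good_space :: "'a::metric_space set \<Rightarrow> bool" where
  "good_space X \<longleftrightarrow> compact X \<and> (\<forall>x\<in>X. \<forall>r>0. connected (ball x r \<inter> X)) \<and> diameter X > 0"

definition bi_lipschitz_on :: "'a::metric_space set \<Rightarrow> ('a \<Rightarrow> 'a) \<Rightarrow> bool" where
  "bi_lipschitz_on X g \<longleftrightarrow> (\<exists>L. L-lipschitz_on X g) \<and>
     (\<exists>c>0. \<forall>x\<in>X. \<forall>y\<in>X. c * dist x y \<le> dist (g x) (g y))"

definition pw_contraction ::
  "'a::metric_space set \<Rightarrow> real \<Rightarrow> ('a \<Rightarrow> 'a) \<Rightarrow> nat \<Rightarrow> (nat \<Rightarrow> 'a set) \<Rightarrow> (nat \<Rightarrow> 'a \<Rightarrow> 'a) \<Rightarrow> bool" where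
  "pw_contraction X lam f N A \<phi> \<longleftrightarrow>
     good_space X \<and> 0 < lam \<and> lam < 1 \<and>
     f ` X \<subseteq> X \<and>
     (\<forall>i<N. openin (top_of_set X) (A i) \<and> connected (A i)) \<and>
     (\<forall>i<N. \<forall>j<N. i \<noteq> j \<longrightarrow> A i \<inter> A j = {}) \<and>
     X \<subseteq> closure (\<Union>i<N. A i) \<and>
     (\<forall>i<N. \<phi> i ` X \<subseteq> X \<and> bi_lipschitz_on X (\<phi> i) \<and> lam-lipschitz_on X (\<phi> i)) \<and>
     (\<forall>i<N. \<forall>x\<in>A i. f x = \<phi> i x)"

definition singular_set :: "'a set \<Rightarrow> nat \<Rightarrow> (nat \<Rightarrow> 'a set) \<Rightarrow> 'a set" where
  "singular_set X N A = X - (\<Union>i<N. A i)"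

definition regular_of_order :: "'a set \<Rightarrow> ('a \<Rightarrow> 'a) \<Rightarrow> nat \<Rightarrow> (nat \<Rightarrow> 'a set) \<Rightarrow> nat \<Rightarrow> 'a \<Rightarrow> bool" where
  "regular_of_order X f N A n x \<longleftrightarrow> x \<in> X \<and> (\<forall>j<n. (f ^^ j) x \<notin> singular_set X N A)"

definition regular_set :: "'a set \<Rightarrow> ('a \<Rightarrow> 'a) \<Rightarrow> nat \<Rightarrow> (nat \<Rightarrow> 'a set) \<Rightarrow> 'a set" where
  "regular_set X f N A = {x. \<forall>n. regular_of_order X f N A n x}"

definition itineraries :: "'a set \<Rightarrow> ('a \<Rightarrow> 'a) \<Rightarrow> nat \<Rightarrow> (nat \<Rightarrow> 'a set) \<Rightarrow> nat \<Rightarrow> nat list set" where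
  "itineraries X f N A n = {\<alpha>. length \<alpha> = n \<and>
     (\<exists>x. regular_of_order X f N A n x \<and> (\<forall>j<n. (f ^^ j) x \<in> A (\<alpha> ! j)))}"

text \<open>phi^alpha = phi_(i_(n-1)) o ... o phi_(i_0).\<close>
definition phi_comp :: "(nat \<Rightarrow> 'a \<Rightarrow> 'a) \<Rightarrow> nat list \<Rightarrow> 'a \<Rightarrow> 'a" where
  "phi_comp \<phi> \<alpha> = fold (\<lambda>i g. \<phi> i \<circ> g) \<alpha> id"

definition Omega_set ::
  "'a::topological_space set \<Rightarrow> ('a \<Rightarrow> 'a) \<Rightarrow> nat \<Rightarrow> (nat \<Rightarrow> 'a set) \<Rightarrow> (nat \<Rightarrow> 'a \<Rightarrow> 'a) \<Rightarrow> 'a \<Rightarrow> 'a set" where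
  "Omega_set X f N A \<phi> x0 =
     (\<Inter>m\<in>{1..}. closure (\<Union>n\<in>{m..}. {phi_comp \<phi> \<alpha> x0 | \<alpha>. \<alpha> \<in> itineraries X f N A n}))"

definition omega_limit :: "('a::topological_space \<Rightarrow> 'a) \<Rightarrow> 'a \<Rightarrow> 'a set" where
  "omega_limit f x = (\<Inter>m\<in>{1..}. closure (\<Union>n\<in>{m..}. {(f ^^ n) x}))"

lemma phi_comp_sanity: "phi_comp \<phi> [a, b] x = \<phi> b (\<phi> a x)"
  by (simp add: phi_comp_def)

end

theory Submission
  imports Defs
begin

text \<open>Along the itinerary \<open>\<alpha>\<close> of a regular point \<open>x\<close>, the composed branch \<open>\<phi>\<^sup>\<alpha>\<close> sends \<open>x\<close> to
  \<open>f\<^sup>n x\<close> and, being a \<open>\<lambda>\<^sup>n\<close>-Lipschitz map, sends \<open>x\<^sub>0\<close> to within \<open>\<lambda>\<^sup>n d(x, x\<^sub>0)\<close> of it.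
  Hence the orbit of \<open>x\<close> and the points \<open>\<phi>\<^sup>\<alpha> x\<^sub>0\<close> are asymptotic, so every accumulation point
  of the orbit is an accumulation point of the \<open>\<phi>\<^sup>\<alpha> x\<^sub>0\<close>.\<close>

lemma tail_closures_subset_if_asymptotic:
  fixes a b :: "nat \<Rightarrow> 'a::metric_space"
  assumes "(\<lambda>n. dist (a n) (b n)) \<longlonglongrightarrow> 0" and "\<And>n. b n \<in> S n"
  shows "(\<Inter>m\<in>{1..}. closure (\<Union>n\<in>{m..}. {a n})) \<subseteq> (\<Inter>m\<in>{1..}. closure (\<Union>n\<in>{m..}. S n))"
proof
  fix y
  assume y: "y \<in> (\<Inter>m\<in>{1..}. closure (\<Union>n\<in>{m..}. {a n}))"
  show "y \<in> (\<Inter>m\<in>{1..}. closure (\<Union>n\<in>{m..}. S n))"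
  proof
    fix m :: nat
    assume m: "m \<in> {1..}"
    show "y \<in> closure (\<Union>n\<in>{m..}. S n)"
      unfolding closure_approachable
    proof (intro allI impI)
      fix e :: real
      assume "0 < e"
      then have "\<forall>\<^sub>F n in sequentially. dist (a n) (b n) < e / 2"
        using assms(1) by (intro order_tendstoD) auto
      then obtain M where M: "\<And>n. n \<ge> M \<Longrightarrow> dist (a n) (b n) < e / 2"
        by (auto simp: eventually_sequentially)
      have "y \<in> closure (\<Union>n\<in>{max m M..}. {a n})"
        using y m by simp
      then obtain n where n: "n \<ge> max m M" "dist (a n) y < e / 2"
        unfolding closure_approachable using \<open>0 < e\<close> by (metis UN_E atLeast_iff half_gt_zero singletonD)
      have "dist (b n) y \<le> dist (a n) (b n) + dist (a n) y"
        by (rule dist_triangle3)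
      also have "\<dots> < e"
        using M[of n] n by auto
      finally show "\<exists>z\<in>\<Union>n\<in>{m..}. S n. dist z y < e"
        using assms(2)[of n] n(1) by auto
    qed
  qed
qed

lemma phi_comp_Nil: "phi_comp \<phi> [] = id"
  by (simp add: phi_comp_def)

lemma phi_comp_snoc: "phi_comp \<phi> (\<alpha> @ [i]) = \<phi> i \<circ> phi_comp \<phi> \<alpha>"
  by (simp add: phi_comp_def)

lemma phi_comp_lipschitz_on:
  assumes "\<And>i. i \<in> set \<alpha> \<Longrightarrow> \<phi> i ` X \<subseteq> X \<and> L-lipschitz_on X (\<phi> i)"
  shows "phi_comp \<phi> \<alpha> ` X \<subseteq> X \<and> (L ^ length \<alpha>)-lipschitz_on X (phi_comp \<phi> \<alpha>)"
  using assms
proof (induction \<alpha> rule: rev_induct)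
  case Nil
  show ?case
    using lipschitz_on_id by (simp add: phi_comp_Nil id_def)
next
  case (snoc i \<alpha>)
  then have IH: "phi_comp \<phi> \<alpha> ` X \<subseteq> X" "(L ^ length \<alpha>)-lipschitz_on X (phi_comp \<phi> \<alpha>)"
    and step: "\<phi> i ` X \<subseteq> X" "L-lipschitz_on X (\<phi> i)"
    by auto
  have "(L * L ^ length \<alpha>)-lipschitz_on X (\<phi> i \<circ> phi_comp \<phi> \<alpha>)"
    using IH step by (intro lipschitz_on_compose lipschitz_on_subset[OF step(2)])
  then show ?case
    using IH(1) step(1) by (auto simp: phi_comp_snoc)
qed

lemma phi_comp_along_orbit:
  assumes "\<And>j. j < n \<Longrightarrow> g j < N \<and> (f ^^ j) x \<in> A (g j)"
    and "\<And>i y. i < N \<Longrightarrow> y \<in> A i \<Longrightarrow> f y = \<phi> i y"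
  shows "phi_comp \<phi> (map g [0..<n]) x = (f ^^ n) x"
  using assms(1)
proof (induction n)
  case 0
  then show ?case by (simp add: phi_comp_Nil)
next
  case (Suc n)
  then have "f ((f ^^ n) x) = \<phi> (g n) ((f ^^ n) x)"
    using assms(2) by simp
  then show ?case
    using Suc by (simp add: phi_comp_snoc)
qed

lemma regular_point_itinerary:
  assumes "x \<in> regular_set X f N A" and "f ` X \<subseteq> X"
  obtains g where "\<And>j. g j < N \<and> (f ^^ j) x \<in> A (g j)"
    and "\<And>n. map g [0..<n] \<in> itineraries X f N A n"
proof -
  have reg: "regular_of_order X f N A n x" for n
    using assms(1) by (simp add: regular_set_def)
  have "(f ^^ j) x \<in> X" for j
    using reg assms(2) by (induction j) (auto simp: regular_of_order_def)
  then have "\<exists>i. i < N \<and> (f ^^ j) x \<in> A i" for j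
    using reg[of "Suc j"] by (auto simp: regular_of_order_def singular_set_def)
  then obtain g where g: "\<And>j. g j < N \<and> (f ^^ j) x \<in> A (g j)"
    by metis
  moreover have "map g [0..<n] \<in> itineraries X f N A n" for n
    using reg g by (auto simp: itineraries_def)
  ultimately show ?thesis
    using that by blast
qed

lemma dist_orbit_phi_comp_itinerary:
  assumes "pw_contraction X lam f N A \<phi>" and "x \<in> X" and "x0 \<in> X"
    and itinerary: "\<And>j. j < n \<Longrightarrow> g j < N \<and> (f ^^ j) x \<in> A (g j)"
  shows "dist ((f ^^ n) x) (phi_comp \<phi> (map g [0..<n]) x0) \<le> lam ^ n * dist x x0"
proof -
  from assms(1) have branches: "\<And>i. i < N \<Longrightarrow> \<phi> i ` X \<subseteq> X \<and> lam-lipschitz_on X (\<phi> i)"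
    and agree: "\<And>i y. i < N \<Longrightarrow> y \<in> A i \<Longrightarrow> f y = \<phi> i y"
    by (auto simp: pw_contraction_def)
  have "\<phi> i ` X \<subseteq> X \<and> lam-lipschitz_on X (\<phi> i)" if "i \<in> set (map g [0..<n])" for i
    using that branches itinerary by (metis atLeastLessThan_iff imageE set_map set_upt)
  then have "(lam ^ n)-lipschitz_on X (phi_comp \<phi> (map g [0..<n]))"
    using phi_comp_lipschitz_on[of "map g [0..<n]" \<phi> X lam] by simp
  moreover have "phi_comp \<phi> (map g [0..<n]) x = (f ^^ n) x"
    using itinerary by (intro phi_comp_along_orbit[OF _ agree]) auto
  ultimately show ?thesis
    using assms(2,3) by (metis lipschitz_onD)
qed

theorem lemma3p2:
  fixes X :: "'a::metric_space set" and lam :: real and f :: "'a \<Rightarrow> 'a"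
    and N :: nat and A :: "nat \<Rightarrow> 'a set" and \<phi> :: "nat \<Rightarrow> 'a \<Rightarrow> 'a" and x0 :: 'a
  assumes "pw_contraction X lam f N A \<phi>"
    and "x0 \<in> X"
  shows "\<forall>x \<in> regular_set X f N A. omega_limit f x \<subseteq> Omega_set X f N A \<phi> x0"
proof
  fix x
  assume x: "x \<in> regular_set X f N A"
  then have "x \<in> X"
    by (simp add: regular_set_def regular_of_order_def)
  from assms(1) have lam: "0 < lam" "lam < 1" and "f ` X \<subseteq> X"
    by (auto simp: pw_contraction_def)
  obtain g where g: "\<And>j. g j < N \<and> (f ^^ j) x \<in> A (g j)"
    and itin: "\<And>n. map g [0..<n] \<in> itineraries X f N A n"
    using regular_point_itinerary[OF x \<open>f ` X \<subseteq> X\<close>] by blast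
  have "(\<lambda>n. lam ^ n * dist x x0) \<longlonglongrightarrow> 0"
    using lam by (intro tendsto_mult_left_zero LIMSEQ_realpow_zero) auto
  then have "(\<lambda>n. dist ((f ^^ n) x) (phi_comp \<phi> (map g [0..<n]) x0)) \<longlonglongrightarrow> 0"
    by (rule Lim_null_comparison[rotated])
      (simp add: dist_orbit_phi_comp_itinerary[OF assms(1) \<open>x \<in> X\<close> assms(2)] g)
  then show "omega_limit f x \<subseteq> Omega_set X f N A \<phi> x0"
    unfolding omega_limit_def Omega_set_def
    by (rule tail_closures_subset_if_asymptotic) (use itin in blast)
qed

end
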